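(* Let $(\Theta,\mathcal{D})$ be a measurable space with a probability measure $\nu$, and let $\mathcal{M}^\Theta=\{P^\theta:\theta\in\Theta\}\subseteq\mathcal{M}_1$ with $\theta\mapsto P^\theta(A)$ measurable for all $A\in\mathcal{F}$, and suppose $\mathcal{M}^\Theta$ is closed under countable convex combinations. Let $\mathbb{P}(A)=\int_\Theta P^\theta(A)\,\nu(\mathrm{d}\theta)$ be the mixture probability measure. Let $\alpha$ be of the form $\alpha(Q)=\widetilde\alpha(Q)$ for $Q\in\mathcal{Q}^{\mathbb{P}}$, $\alpha(Q)=+\infty$ for $Q\in\mathcal{M}_1\setminus\mathcal{Q}^{\mathbb{P}}$, where $\mathcal{Q}^{\mathbb{P}}$ is a weak-$*$-closed subset of $\mathcal{P}^{\mathbb{P}}$, $\widetilde\alpha<\infty$ on $\mathcal{Q}^{\mathbb{P}}$ and $\inf_{\mathcal{Q}^{\mathbb{P}}}\widetilde\alpha>-\infty$. Suppose that for all $A\in\mathcal{F}$ with $\mathbb{P}(A)>0$, $$\mathbb{P}(A)>\int_\Theta\widetilde P_2^\theta(A)\,\nu(\mathrm{d}\theta),$$ where $\widetilde P_2^\theta$ denotes the (unnormalized) singular part of the Lebesgue decomposition of $P^\theta$ with respect to $\mathbb{P}$. Then for all $X\in\mathcal{X}^{\mathcal{M}^\Theta}\cap L^\infty(\mathbb{P})$, $$\widehat\rho^{\mathcal{M}^\Theta}(X)=\widehat\rho^{\mathbb{P}}(X)=\rho^{\mathbb{P}}(X)=\rho^{\mathcal{M}^\Theta}(X).$$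
   Context: $(\Omega,\mathcal{F})$ is a measurable space, $\mathcal{M}_1$ the set of probability measures on it with the topology of weak (weak-$*$) convergence, $\mathcal{X}$ the space of pointwise bounded $\mathcal{F}$-measurable real functions, $L^\infty(P)=L^\infty(\Omega,\mathcal{F},P)$, $\mathcal{P}^P=\{Q\in\mathcal{M}_1:Q\ll P\}$. With $\alpha$ as in the claim, $\rho(X)=\sup_{Q\in\mathcal{M}_1}\{\mathbb{E}_Q[-X]-\alpha(Q)\}$ on $\mathcal{X}$ (assumed real-valued). For $P\in\mathcal{M}_1$, $X\in L^\infty(P)$: $\rho^P(X)=\inf_{\{\widetilde X\in\mathcal{X}:P(\widetilde X=X)=1\}}\rho(\widetilde X)$ and $\widehat\rho^P(X)=\sup_{Q\in\mathcal{P}^P}\{\mathbb{E}_Q[-X]-\alpha(Q)\}$. For $\mathcal{M}\subseteq\mathcal{M}_1$: $\mathcal{X}^{\mathcal{M}}=\bigcap_{P\in\mathcal{M}}L^\infty(P)$, $\rho^{\mathcal{M}}(X)=\sup_{P\in\mathcal{M}}\rho^P(X)$, $\widehat\rho^{\mathcal{M}}(X)=\sup_{P\in\mathcal{M}}\widehat\rho^P(X)$. Closed under countable convex combinations: $\sum_i\lambda_iP_i\in\mathcal{M}^\Theta$ for $P_i\in\mathcal{M}^\Theta$, $\lambda_i\ge0$, $\sum\lambda_i=1$. *)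

theory Defs
  imports "HOL-Probability.Probability"
begin

text \<open>The base measurable space (Omega, F) is represented by a measure M (only space M and
  sets M are used).  M1 M is the set of probability measures on (Omega, F).\<close>

definition M1 :: "'a measure \<Rightarrow> 'a measure set" where
  "M1 M = {N. sets N = sets M \<and> prob_space N}"

definition Xb :: "'a measure \<Rightarrow> ('a \<Rightarrow> real) set" where
  "Xb M = {X. X \<in> borel_measurable M \<and> bounded (X ` space M)}"

definition Linf :: "'a measure \<Rightarrow> ('a \<Rightarrow> real) set" where
  "Linf P = {X. X \<in> borel_measurable P \<and> (\<exists>c. AE \<omega> in P. \<bar>X \<omega>\<bar> \<le> c)}"

definition weak_open :: "'a measure \<Rightarrow> 'a measure set \<Rightarrow> bool" where
  "weak_open M U \<longleftrightarrow> U \<subseteq> M1 M \<and>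
     (\<forall>Q\<in>U. \<exists>F e. finite F \<and> F \<subseteq> Xb M \<and> e > 0 \<and>
        {R \<in> M1 M. \<forall>X\<in>F. \<bar>(\<integral>\<omega>. X \<omega> \<partial>R) - (\<integral>\<omega>. X \<omega> \<partial>Q)\<bar> < e} \<subseteq> U)"

definition weak_closed :: "'a measure \<Rightarrow> 'a measure set \<Rightarrow> bool" where
  "weak_closed M S \<longleftrightarrow> S \<subseteq> M1 M \<and> weak_open M (M1 M - S)"

definition rho :: "'a measure \<Rightarrow> ('a measure \<Rightarrow> ereal) \<Rightarrow> ('a \<Rightarrow> real) \<Rightarrow> ereal" where
  "rho M \<alpha> X = (SUP Q \<in> M1 M. ereal (\<integral>\<omega>. - X \<omega> \<partial>Q) - \<alpha> Q)"

definition rhoP :: "'a measure \<Rightarrow> ('a measure \<Rightarrow> ereal) \<Rightarrow> 'a measure \<Rightarrow> ('a \<Rightarrow> real) \<Rightarrow> ereal" where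
  "rhoP M \<alpha> P X = (INF Xt \<in> {Xt \<in> Xb M. AE \<omega> in P. Xt \<omega> = X \<omega>}. rho M \<alpha> Xt)"

definition rho_hat :: "'a measure \<Rightarrow> ('a measure \<Rightarrow> ereal) \<Rightarrow> 'a measure \<Rightarrow> ('a \<Rightarrow> real) \<Rightarrow> ereal" where
  "rho_hat M \<alpha> P X =
     (SUP Q \<in> {Q \<in> M1 M. absolutely_continuous P Q}. ereal (\<integral>\<omega>. - X \<omega> \<partial>Q) - \<alpha> Q)"

definition XM :: "'a measure set \<Rightarrow> ('a \<Rightarrow> real) set" where
  "XM Ms = (\<Inter>P\<in>Ms. Linf P)"

definition rhoM :: "'a measure \<Rightarrow> ('a measure \<Rightarrow> ereal) \<Rightarrow> 'a measure set \<Rightarrow> ('a \<Rightarrow> real) \<Rightarrow> ereal" where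
  "rhoM M \<alpha> Ms X = (SUP P \<in> Ms. rhoP M \<alpha> P X)"

definition rho_hatM :: "'a measure \<Rightarrow> ('a measure \<Rightarrow> ereal) \<Rightarrow> 'a measure set \<Rightarrow> ('a \<Rightarrow> real) \<Rightarrow> ereal" where
  "rho_hatM M \<alpha> Ms X = (SUP P \<in> Ms. rho_hat M \<alpha> P X)"

text \<open>Lebesgue decomposition of P with respect to Pb: P = P1 + P2 with P1 << Pb and
  P2 singular to Pb.  The singular part is the (unique, for finite P) P2.\<close>
definition lebesgue_decomp :: "'a measure \<Rightarrow> 'a measure \<Rightarrow> 'a measure \<Rightarrow> 'a measure \<Rightarrow> bool" where
  "lebesgue_decomp Pb P P1 P2 \<longleftrightarrow>
     sets P1 = sets P \<and> sets P2 = sets P \<and> absolutely_continuous Pb P1 \<and>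
     (\<exists>S\<in>sets P. emeasure Pb S = 0 \<and> emeasure P2 (space P - S) = 0) \<and>
     (\<forall>A\<in>sets P. emeasure P A = emeasure P1 A + emeasure P2 A)"

definition singular_part :: "'a measure \<Rightarrow> 'a measure \<Rightarrow> 'a measure" where
  "singular_part Pb P = (THE P2. \<exists>P1. lebesgue_decomp Pb P P1 P2)"

end

theory Submission
  imports Defs
begin

(* Write Pm for the mixture and P_theta for the members.  Since alpha is infinite outside
   Qset, which consists of measures absolutely continuous w.r.t. Pm, rho(Y) = rho_hat^Pm(X)
   for every bounded Y that equals X Pm-a.s.  Truncating X at a common essential bound for
   Pm and P_theta therefore gives
     rho_hat^{P_theta}(X) <= rho^{P_theta}(X) <= rho_hat^Pm(X) = rho^Pm(X)
   for every theta.  The reverse inequality only needs one member with Pm << P_theta*, because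
   then every Q << Pm is also Q << P_theta*.  Such a member is found by a Halmos-Savage
   exhaustion: the sets C with Pm|C << P_theta for some theta are closed under countable
   unions (mix the witnesses with weights 2^-(i+1)), so there is a Pm-essentially largest one;
   the singular-part hypothesis says that every Pm-non-null set is charged by the absolutely
   continuous part of some P_theta, which forces the complement of the largest set to be
   Pm-null. *)

section \<open>Exhaustion and the singular part\<close>

lemma finite_measure_exhaustion:
  assumes "finite_measure \<mu>" and "NN \<subseteq> sets \<mu>" and "{} \<in> NN"
    and Union_closed: "\<And>F. (\<And>i::nat. F i \<in> NN) \<Longrightarrow> (\<Union>i. F i) \<in> NN"
  shows "\<exists>N\<in>NN. \<forall>E\<in>NN. measure \<mu> (E - N) = 0"
proof -
  interpret finite_measure \<mu> by fact
  define s where "s = (SUP E\<in>NN. measure \<mu> E)"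
  have bdd: "bdd_above (measure \<mu> ` NN)"
    by (intro bdd_aboveI[of _ "measure \<mu> (space \<mu>)"]) (use assms(2) bounded_measure in auto)
  have "\<exists>E\<in>NN. s - inverse (Suc n) < measure \<mu> E" for n :: nat
    using less_cSUP_iff[OF _ bdd, of "s - inverse (Suc n)"] assms(3) unfolding s_def by auto
  then obtain F where F: "\<And>n. F n \<in> NN" "\<And>n. s - inverse (Suc n) < measure \<mu> (F n)"
    by metis
  define N where "N = (\<Union>n. F n)"
  have N: "N \<in> NN" "N \<in> sets \<mu>" unfolding N_def using Union_closed F assms(2) by blast+
  have N_le: "measure \<mu> E \<le> s" if "E \<in> NN" for E
    unfolding s_def using that bdd by (rule cSUP_upper)
  have "s - inverse (Suc n) \<le> measure \<mu> N" for n
    using F(2)[of n] finite_measure_mono[of "F n" N] N unfolding N_def by fastforce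
  moreover have "(\<lambda>n. s - inverse (Suc n)) \<longlonglongrightarrow> s"
    using tendsto_diff[OF tendsto_const LIMSEQ_inverse_real_of_nat] by simp
  ultimately have N_sup: "measure \<mu> N = s"
    using N_le[OF N(1)] by (intro antisym LIMSEQ_le_const2) auto
  show ?thesis
  proof (intro bexI[OF _ N(1)] ballI)
    fix E assume E: "E \<in> NN"
    have "(\<Union>i::nat. if i = 0 then E else N) = E \<union> N"
      by (auto split: if_splits)
    then have "E \<union> N \<in> NN"
      using Union_closed[of "\<lambda>i. if i = 0 then E else N"] E N(1) by simp
    then have "measure \<mu> N + measure \<mu> (E - N) \<le> s"
      using N_le[of "E \<union> N"] finite_measure_Union[of N "E - N"] E N assms(2)
      by (auto simp: Un_commute)
    then show "measure \<mu> (E - N) = 0"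
      using N_sup measure_nonneg[of \<mu> "E - N"] by linarith
  qed
qed

lemma emeasure_Int_plus_Diff:
  assumes "A \<in> sets M" "B \<in> sets M"
  shows "emeasure M (A \<inter> B) + emeasure M (A - B) = emeasure M A"
  using plus_emeasure[of "A \<inter> B" M "A - B"] assms by (auto simp: Int_Diff_Un)

definition singular_support :: "'a measure \<Rightarrow> 'a measure \<Rightarrow> 'a set \<Rightarrow> bool" where
  "singular_support Pm P N \<longleftrightarrow> N \<in> null_sets Pm \<and> (\<forall>E\<in>null_sets Pm. emeasure P (E - N) = 0)"

lemma singular_support_exists:
  assumes "finite_measure P" "sets P = sets Pm"
  obtains N where "singular_support Pm P N"
proof -
  have "\<exists>N\<in>null_sets Pm. \<forall>E\<in>null_sets Pm. measure P (E - N) = 0"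
    using assms by (intro finite_measure_exhaustion) (auto intro: null_sets_UN)
  then show thesis
    using that finite_measure.emeasure_eq_measure[OF assms(1)]
    unfolding singular_support_def by auto
qed

lemma emeasure_null_set_eq_Int_singular_support:
  assumes "singular_support Pm P N" "sets P = sets Pm" "B \<in> null_sets Pm"
  shows "emeasure P B = emeasure P (B \<inter> N)"
  using assms emeasure_Int_plus_Diff[of B P N] unfolding singular_support_def by force

lemma lebesgue_decomp_singular_support:
  assumes N: "singular_support Pm P N" and sets: "sets P = sets Pm"
  shows "lebesgue_decomp Pm P (density P (indicator (space P - N))) (density P (indicator N))"
proof -
  have N_sets: "N \<in> sets P" "space P - N \<in> sets P"
    using N sets unfolding singular_support_def by auto
  have "absolutely_continuous Pm (density P (indicator (space P - N)))"
    unfolding absolutely_continuous_def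
  proof
    fix A assume A: "A \<in> null_sets Pm"
    have "emeasure P ((space P - N) \<inter> A) = emeasure P (A - N)"
      using A sets sets.sets_into_space[of A P] by (intro arg_cong[where f="emeasure P"]) auto
    then show "A \<in> null_sets (density P (indicator (space P - N)))"
      using A N sets N_sets unfolding singular_support_def
      by (auto simp: null_sets_def emeasure_restricted)
  qed
  moreover have "emeasure P (A \<inter> N) + emeasure P (A - N)
      = emeasure (density P (indicator (space P - N))) A + emeasure (density P (indicator N)) A"
    if "A \<in> sets P" for A
  proof -
    have "(space P - N) \<inter> A = A - N" using sets.sets_into_space[OF that] by auto
    then show ?thesis using that N_sets by (simp add: emeasure_restricted Int_commute add.commute)
  qed
  moreover have "emeasure (density P (indicator N)) (space P - N) = 0"
    using N_sets by (simp add: emeasure_restricted)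
  ultimately show ?thesis
    using N N_sets emeasure_Int_plus_Diff[of _ P N]
    unfolding lebesgue_decomp_def singular_support_def by auto
qed

lemma lebesgue_decomp_singular_eq:
  assumes N: "singular_support Pm P N" and sets: "sets P = sets Pm"
    and D: "lebesgue_decomp Pm P P1 P2" and A: "A \<in> sets P"
  shows "emeasure P2 A = emeasure P (A \<inter> N)"
proof -
  from D obtain S where S: "S \<in> null_sets Pm" "emeasure P2 (space P - S) = 0"
    and sets12: "sets P1 = sets P" "sets P2 = sets P"
    and ac: "absolutely_continuous Pm P1"
    and add: "\<And>A. A \<in> sets P \<Longrightarrow> emeasure P A = emeasure P1 A + emeasure P2 A"
    unfolding lebesgue_decomp_def using sets by auto
  have N_sets: "N \<in> sets P" using N sets unfolding singular_support_def by auto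
  have on_null: "emeasure P B = emeasure P2 B" if "B \<in> null_sets Pm" for B
  proof -
    have "B \<in> null_sets P1" using that ac unfolding absolutely_continuous_def by auto
    then have "emeasure P1 B = 0" by auto
    then show ?thesis using add[of B] that sets by auto
  qed
  have on_S: "emeasure P2 B = emeasure P2 (B \<inter> S)" if "B \<in> sets P" for B
  proof -
    have "emeasure P2 (B - S) \<le> emeasure P2 (space P - S)"
      using that S sets sets12 sets.sets_into_space[OF that] by (intro emeasure_mono) auto
    then show ?thesis
      using S(2) emeasure_Int_plus_Diff[of B P2 S] that S(1) sets sets12 by auto
  qed
  have AS: "A \<inter> S \<in> null_sets Pm" "A \<inter> S \<inter> N \<in> null_sets Pm"
    using A S N_sets sets by (auto intro: null_set_Int1 null_set_Int2)
  have AN: "A \<inter> N \<in> null_sets Pm"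
    using A N sets unfolding singular_support_def by (auto intro: null_set_Int1)
  have "emeasure P2 A = emeasure P (A \<inter> S)"
    using on_S[OF A] on_null[OF AS(1)] by simp
  also have "\<dots> = emeasure P (A \<inter> S \<inter> N)"
    by (rule emeasure_null_set_eq_Int_singular_support[OF N sets AS(1)])
  also have "\<dots> = emeasure P2 (A \<inter> N \<inter> S)"
    using on_null[OF AS(2)] by (simp add: ac_simps)
  also have "\<dots> = emeasure P (A \<inter> N)"
    using on_S[of "A \<inter> N"] on_null[OF AN] A N_sets by auto
  finally show ?thesis .
qed

lemma emeasure_singular_part:
  assumes N: "singular_support Pm P N" and sets: "sets P = sets Pm" and A: "A \<in> sets P"
  shows "emeasure (singular_part Pm P) A = emeasure P (A \<inter> N)"
proof -
  have "\<exists>!P2. \<exists>P1. lebesgue_decomp Pm P P1 P2"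
  proof (rule ex1I)
    show "\<exists>P1. lebesgue_decomp Pm P P1 (density P (indicator N))"
      using lebesgue_decomp_singular_support[OF N sets] by blast
    fix P2 assume "\<exists>P1. lebesgue_decomp Pm P P1 P2"
    then obtain P1 where D: "lebesgue_decomp Pm P P1 P2" ..
    have "sets P2 = sets P" using D unfolding lebesgue_decomp_def by auto
    then show "P2 = density P (indicator N)"
      using lebesgue_decomp_singular_eq[OF N sets D]
        lebesgue_decomp_singular_eq[OF N sets lebesgue_decomp_singular_support[OF N sets]]
      by (intro measure_eqI) auto
  qed
  then obtain P1 where "lebesgue_decomp Pm P P1 (singular_part Pm P)"
    unfolding singular_part_def by (rule theI'[THEN exE])
  then show ?thesis by (rule lebesgue_decomp_singular_eq[OF N sets _ A])
qed

section \<open>A member dominating the mixture\<close>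

definition absolutely_continuous_on :: "'a set \<Rightarrow> 'a measure \<Rightarrow> 'a measure \<Rightarrow> bool" where
  "absolutely_continuous_on C P Q \<longleftrightarrow> (\<forall>A\<in>null_sets P. A \<subseteq> C \<longrightarrow> A \<in> null_sets Q)"

lemma absolutely_continuous_on_UN:
  assumes "\<And>i::nat. C i \<in> sets Q" "\<And>i. sets (Ps i) = sets Q"
    and "\<And>i. absolutely_continuous_on (C i) (Ps i) Q" "\<And>i. null_sets P \<subseteq> null_sets (Ps i)"
  shows "absolutely_continuous_on (\<Union>i. C i) P Q"
  unfolding absolutely_continuous_on_def
proof (intro ballI impI)
  fix A assume A: "A \<in> null_sets P" "A \<subseteq> (\<Union>i. C i)"
  have "A \<inter> C i \<in> null_sets Q" for i
  proof -
    have "A \<in> null_sets (Ps i)" using assms(4) A(1) by blast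
    then have "A \<inter> C i \<in> null_sets (Ps i)"
      using assms(1,2) by (intro null_set_Int2) auto
    then show ?thesis using assms(3) unfolding absolutely_continuous_on_def by auto
  qed
  then have "(\<Union>i. A \<inter> C i) \<in> null_sets Q" by blast
  moreover have "(\<Union>i. A \<inter> C i) = A" using A(2) by auto
  ultimately show "A \<in> null_sets Q" by simp
qed

lemma absolutely_continuous_if_on_conull:
  assumes "absolutely_continuous_on C P Q" "C \<in> sets Q" "space Q - C \<in> null_sets Q"
    and "sets P = sets Q"
  shows "absolutely_continuous P Q"
  unfolding absolutely_continuous_def
proof
  fix A assume A: "A \<in> null_sets P"
  have "A \<inter> C \<in> null_sets P"
    using assms(2,4) A by (intro null_set_Int2) auto
  then have "A \<inter> C \<in> null_sets Q"
    using assms(1) unfolding absolutely_continuous_on_def by auto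
  moreover have "A - C \<in> null_sets Q"
  proof (rule null_sets_subset[OF assms(3)])
    have "A \<in> sets Q" using A assms(4) by auto
    then show "A - C \<in> sets Q" "A - C \<subseteq> space Q - C"
      using assms(2) sets.sets_into_space by auto
  qed
  ultimately have "(A \<inter> C) \<union> (A - C) \<in> null_sets Q" by (rule null_sets.Un)
  then show "A \<in> null_sets Q" by (simp add: Int_Diff_Un)
qed

lemma exists_absolutely_continuous_on_subset:
  assumes Q: "finite_measure Q" and sets: "sets P = sets Q" and E: "E \<in> sets P"
  obtains D where "D \<in> sets P" "D \<subseteq> E" "E - D \<in> null_sets P" "absolutely_continuous_on D P Q"
proof -
  define ZZ where "ZZ = {Z \<in> null_sets P. Z \<subseteq> E}"
  have "\<exists>Z\<in>ZZ. \<forall>A\<in>ZZ. measure Q (A - Z) = 0"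
    using Q sets by (intro finite_measure_exhaustion) (auto simp: ZZ_def)
  then obtain Z where Z: "Z \<in> null_sets P" "Z \<subseteq> E"
    and Z_max: "\<And>A. A \<in> ZZ \<Longrightarrow> measure Q (A - Z) = 0"
    unfolding ZZ_def by blast
  show thesis
  proof (rule that[of "E - Z"])
    show "E - Z \<in> sets P" "E - Z \<subseteq> E" using E Z by auto
    show "E - (E - Z) \<in> null_sets P" using Z by (simp add: Diff_Diff_Int Int_absorb1)
    show "absolutely_continuous_on (E - Z) P Q"
      unfolding absolutely_continuous_on_def
    proof (intro ballI impI)
      fix A assume A: "A \<in> null_sets P" "A \<subseteq> E - Z"
      then have "measure Q ((Z \<union> A) - Z) = 0" using Z by (intro Z_max) (auto simp: ZZ_def)
      moreover have "(Z \<union> A) - Z = A" using A(2) by auto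
      ultimately show "A \<in> null_sets Q"
        using A(1) sets finite_measure.emeasure_eq_measure[OF Q, of A] by (intro null_setsI) auto
    qed
  qed
qed

lemma null_sets_subset_suminf_component:
  assumes P: "finite_measure P" and Ps: "\<And>i. prob_space (Ps i)" "\<And>i. sets (Ps i) = sets P"
    and lam: "lam sums 1" "\<And>i. lam i > 0"
    and comb: "\<And>A. A \<in> sets P \<Longrightarrow> measure P A = (\<Sum>i. lam i * measure (Ps i) A)"
  shows "null_sets P \<subseteq> null_sets (Ps i)"
proof
  fix A assume A: "A \<in> null_sets P"
  have "norm (lam j * measure (Ps j) A) \<le> lam j" for j
    using lam(2)[of j] prob_space.prob_le_1[OF Ps(1)[of j], of A]
    by (simp add: abs_mult mult_left_le less_imp_le)
  then have "summable (\<lambda>j. lam j * measure (Ps j) A)"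
    by (intro summable_comparison_test'[OF sums_summable[OF lam(1)]])
  moreover have "(\<Sum>j. lam j * measure (Ps j) A) = 0"
    using comb[of A] null_setsD2[OF A] null_setsD1[OF A] by (simp add: measure_def)
  moreover have "0 \<le> lam j * measure (Ps j) A" for j
    using lam(2)[of j] by simp
  ultimately have "lam i * measure (Ps i) A = 0"
    using suminf_eq_zero_iff by blast
  then have "emeasure (Ps i) A = 0"
    using lam(2)[of i] finite_measure.emeasure_eq_measure[OF prob_space.finite_measure[OF Ps(1)]]
    by simp
  then show "A \<in> null_sets (Ps i)" using null_setsD2[OF A] Ps(2) by auto
qed

lemma exists_absolutely_continuous_on_positive_subset:
  assumes P: "finite_measure P" and Pm: "finite_measure Pm" and sets: "sets P = sets Pm"
    and B: "B \<in> sets Pm" and not_singular: "emeasure (singular_part Pm P) B < emeasure P B"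
  obtains D where "D \<in> sets Pm" "D \<subseteq> B" "D \<notin> null_sets Pm" "absolutely_continuous_on D P Pm"
proof -
  obtain N where N: "singular_support Pm P N" using singular_support_exists[OF P sets] .
  have N_sets: "N \<in> sets P" using N sets unfolding singular_support_def by auto
  have BN: "B - N \<in> sets P" using B N_sets sets by auto
  have BN_pos: "emeasure P (B - N) \<noteq> 0"
  proof
    assume "emeasure P (B - N) = 0"
    then have "emeasure P B = emeasure (singular_part Pm P) B"
      using emeasure_singular_part[OF N sets, of B] emeasure_Int_plus_Diff[of B P N] B sets N_sets
      by simp
    with not_singular show False by simp
  qed
  obtain D where D: "D \<in> sets P" "D \<subseteq> B - N" "(B - N) - D \<in> null_sets P"
    "absolutely_continuous_on D P Pm"
    using exists_absolutely_continuous_on_subset[OF Pm sets BN] .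
  have "(B - N) - ((B - N) - D) = D" using D(2) by auto
  then have D_pos: "emeasure P D \<noteq> 0"
    using emeasure_Diff_null_set[OF D(3) BN] BN_pos by simp
  have "D \<notin> null_sets Pm"
  proof
    assume "D \<in> null_sets Pm"
    then have "emeasure P (D - N) = 0" using N unfolding singular_support_def by auto
    moreover have "D - N = D" using D(2) by auto
    ultimately show False using D_pos by simp
  qed
  then show thesis using that D sets by auto
qed

lemma exists_component_not_singular:
  fixes Pt :: "'b \<Rightarrow> 'a measure"
  assumes nu: "prob_space \<nu>" and Pt: "\<And>\<theta>. \<theta> \<in> space \<nu> \<Longrightarrow> prob_space (Pt \<theta>)"
    and Pm: "finite_measure Pm"
    and meas: "(\<lambda>\<theta>. measure (Pt \<theta>) A) \<in> borel_measurable \<nu>"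
    and mix: "measure Pm A = (\<integral>\<theta>. measure (Pt \<theta>) A \<partial>\<nu>)"
    and less: "(\<integral>\<^sup>+\<theta>. emeasure (singular_part Pm (Pt \<theta>)) A \<partial>\<nu>) < emeasure Pm A"
  shows "\<exists>\<theta>\<in>space \<nu>. emeasure (singular_part Pm (Pt \<theta>)) A < emeasure (Pt \<theta>) A"
proof (rule ccontr)
  interpret nu: prob_space \<nu> by (fact nu)
  assume "\<not> ?thesis"
  then have "(\<integral>\<^sup>+\<theta>. emeasure (Pt \<theta>) A \<partial>\<nu>) \<le> (\<integral>\<^sup>+\<theta>. emeasure (singular_part Pm (Pt \<theta>)) A \<partial>\<nu>)"
    by (intro nn_integral_mono) (auto simp: not_less)
  also have "\<dots> < emeasure Pm A" by (fact less)
  also have "\<dots> = ennreal (\<integral>\<theta>. measure (Pt \<theta>) A \<partial>\<nu>)"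
    using mix finite_measure.emeasure_eq_measure[OF Pm] by simp
  also have "\<dots> = (\<integral>\<^sup>+\<theta>. ennreal (measure (Pt \<theta>) A) \<partial>\<nu>)"
    using meas Pt prob_space.prob_le_1
    by (intro nn_integral_eq_integral[symmetric] nu.integrable_const_bound[of _ 1]) auto
  also have "\<dots> = (\<integral>\<^sup>+\<theta>. emeasure (Pt \<theta>) A \<partial>\<nu>)"
    using Pt by (intro nn_integral_cong) (metis finite_measure.emeasure_eq_measure prob_space.finite_measure)
  finally show False by simp
qed

lemma exists_maximal_absolutely_continuous_on:
  fixes Pt :: "'b \<Rightarrow> 'a measure" and T :: "'b set"
  assumes "T \<noteq> {}" and Pt_M1: "\<forall>\<theta>\<in>T. Pt \<theta> \<in> M1 M"
    and conv: "\<forall>P lam. (\<forall>i. P i \<in> Pt ` T) \<longrightarrow> (\<forall>i. lam i \<ge> 0) \<longrightarrow> lam sums 1 \<longrightarrow>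
        (\<exists>\<theta>\<in>T. \<forall>A\<in>sets M. measure (Pt \<theta>) A = (\<Sum>i. lam i * measure (P i) A))"
    and Pm_M1: "Pm \<in> M1 M"
  obtains C \<theta> where "C \<in> sets M" "\<theta> \<in> T" "absolutely_continuous_on C (Pt \<theta>) Pm"
    "\<And>E \<theta>'. E \<in> sets M \<Longrightarrow> \<theta>' \<in> T \<Longrightarrow> absolutely_continuous_on E (Pt \<theta>') Pm \<Longrightarrow>
      measure Pm (E - C) = 0"
proof -
  have Pt: "prob_space (Pt \<theta>)" "sets (Pt \<theta>) = sets M" if "\<theta> \<in> T" for \<theta>
    using Pt_M1 that unfolding M1_def by auto
  have Pm: "prob_space Pm" "sets Pm = sets M" using Pm_M1 unfolding M1_def by auto
  define CC where "CC = {C \<in> sets M. \<exists>\<theta>\<in>T. absolutely_continuous_on C (Pt \<theta>) Pm}"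
  have CC_UN: "(\<Union>i. C i) \<in> CC" if C: "\<And>i::nat. C i \<in> CC" for C
  proof -
    have "\<forall>i. \<exists>\<theta>. \<theta> \<in> T \<and> absolutely_continuous_on (C i) (Pt \<theta>) Pm"
      using C unfolding CC_def by blast
    then obtain th where th: "\<And>i. th i \<in> T" "\<And>i. absolutely_continuous_on (C i) (Pt (th i)) Pm"
      by (auto dest!: choice)
    define lam where "lam i = (1/2::real) ^ Suc i" for i
    have lam: "lam sums 1" "\<And>i. lam i > 0" unfolding lam_def using power_half_series by auto
    have comb_hyps: "\<And>i. Pt (th i) \<in> Pt ` T" "\<And>i. lam i \<ge> 0"
      using th(1) lam(2) by (auto simp: less_imp_le)
    obtain \<theta> where \<theta>: "\<theta> \<in> T"
      "\<And>A. A \<in> sets M \<Longrightarrow> measure (Pt \<theta>) A = (\<Sum>i. lam i * measure (Pt (th i)) A)"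
      using conv[rule_format, of "\<lambda>i. Pt (th i)" lam, OF comb_hyps lam(1)] by blast
    have "null_sets (Pt \<theta>) \<subseteq> null_sets (Pt (th i))" for i
      using Pt \<theta> th(1) lam
      by (intro null_sets_subset_suminf_component[where Ps="\<lambda>i. Pt (th i)"])
        (auto intro: prob_space.finite_measure)
    moreover have "C i \<in> sets Pm" for i using C Pm(2) unfolding CC_def by auto
    ultimately have "absolutely_continuous_on (\<Union>i. C i) (Pt \<theta>) Pm"
      using th Pt(2) Pm(2)
      by (intro absolutely_continuous_on_UN[where Ps="\<lambda>i. Pt (th i)"]) auto
    moreover have "(\<Union>i. C i) \<in> sets M" using C unfolding CC_def by auto
    ultimately show ?thesis using \<theta>(1) unfolding CC_def by blast
  qed
  have "absolutely_continuous_on {} (Pt \<theta>) Pm" for \<theta>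
    unfolding absolutely_continuous_on_def by auto
  then have "{} \<in> CC" using \<open>T \<noteq> {}\<close> unfolding CC_def by auto
  moreover have "CC \<subseteq> sets Pm" using Pm(2) unfolding CC_def by auto
  ultimately have "\<exists>C\<in>CC. \<forall>E\<in>CC. measure Pm (E - C) = 0"
    using CC_UN Pm(1) prob_space.finite_measure
    by (intro finite_measure_exhaustion) blast+
  then show thesis using that unfolding CC_def by blast
qed

lemma exists_dominating_member:
  fixes Pt :: "'b \<Rightarrow> 'a measure" and T :: "'b set"
  assumes "T \<noteq> {}" and Pt_M1: "\<forall>\<theta>\<in>T. Pt \<theta> \<in> M1 M"
    and conv: "\<forall>P lam. (\<forall>i. P i \<in> Pt ` T) \<longrightarrow> (\<forall>i. lam i \<ge> 0) \<longrightarrow> lam sums 1 \<longrightarrow>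
        (\<exists>\<theta>\<in>T. \<forall>A\<in>sets M. measure (Pt \<theta>) A = (\<Sum>i. lam i * measure (P i) A))"
    and Pm_M1: "Pm \<in> M1 M"
    and not_singular: "\<And>A. A \<in> sets M \<Longrightarrow> A \<notin> null_sets Pm \<Longrightarrow>
        \<exists>\<theta>\<in>T. emeasure (singular_part Pm (Pt \<theta>)) A < emeasure (Pt \<theta>) A"
  shows "\<exists>\<theta>\<in>T. absolutely_continuous (Pt \<theta>) Pm"
proof -
  have Pt: "finite_measure (Pt \<theta>)" "sets (Pt \<theta>) = sets M" if "\<theta> \<in> T" for \<theta>
    using Pt_M1 that unfolding M1_def by (auto intro: prob_space.finite_measure)
  have Pm: "prob_space Pm" "sets Pm = sets M" using Pm_M1 unfolding M1_def by auto
  then interpret Pm: prob_space Pm by simp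
  obtain C \<theta> where C: "C \<in> sets M" "\<theta> \<in> T" "absolutely_continuous_on C (Pt \<theta>) Pm"
    and C_max: "\<And>E \<theta>'. E \<in> sets M \<Longrightarrow> \<theta>' \<in> T \<Longrightarrow> absolutely_continuous_on E (Pt \<theta>') Pm \<Longrightarrow>
      measure Pm (E - C) = 0"
    using exists_maximal_absolutely_continuous_on[OF assms(1-4)] by metis
  have "space M - C \<in> null_sets Pm"
  proof (rule ccontr)
    assume "space M - C \<notin> null_sets Pm"
    then obtain \<theta>' where \<theta>': "\<theta>' \<in> T"
      "emeasure (singular_part Pm (Pt \<theta>')) (space M - C) < emeasure (Pt \<theta>') (space M - C)"
      using not_singular C(1) by blast
    obtain D where D: "D \<in> sets Pm" "D \<subseteq> space M - C" "D \<notin> null_sets Pm"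
      "absolutely_continuous_on D (Pt \<theta>') Pm"
      using exists_absolutely_continuous_on_positive_subset[OF _ Pm.finite_measure_axioms _ _ \<theta>'(2)]
        Pt[OF \<theta>'(1)] Pm(2) C(1) by auto
    then have "measure Pm (D - C) = 0" using C_max[OF _ \<theta>'(1)] Pm(2) by auto
    moreover have "D - C = D" using D(2) by auto
    ultimately have "D \<in> null_sets Pm" using D(1) by (auto simp: Pm.emeasure_eq_measure)
    with D(3) show False ..
  qed
  moreover have "space Pm = space M" using Pm(2) by (rule sets_eq_imp_space_eq)
  ultimately have "absolutely_continuous (Pt \<theta>) Pm"
    using absolutely_continuous_if_on_conull[OF C(3)] C Pt Pm by auto
  with C(2) show ?thesis ..
qed

lemma mixture_has_dominating_member:
  fixes M :: "'a measure" and \<nu> :: "'b measure" and Pt :: "'b \<Rightarrow> 'a measure"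
  assumes nu: "prob_space \<nu>"
    and Pt_M1: "\<forall>\<theta>\<in>space \<nu>. Pt \<theta> \<in> M1 M"
    and Pt_meas: "\<forall>A\<in>sets M. (\<lambda>\<theta>. measure (Pt \<theta>) A) \<in> borel_measurable \<nu>"
    and conv: "\<forall>P lam. (\<forall>i. P i \<in> Pt ` space \<nu>) \<longrightarrow> (\<forall>i. lam i \<ge> 0) \<longrightarrow> lam sums 1 \<longrightarrow>
        (\<exists>\<theta>\<in>space \<nu>. \<forall>A\<in>sets M. measure (Pt \<theta>) A = (\<Sum>i. lam i * measure (P i) A))"
    and Pm_M1: "Pm \<in> M1 M"
    and Pm_mix: "\<forall>A\<in>sets M. measure Pm A = (\<integral>\<theta>. measure (Pt \<theta>) A \<partial>\<nu>)"
    and sing: "\<forall>A\<in>sets M. measure Pm A > 0 \<longrightarrow>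
        emeasure Pm A > (\<integral>\<^sup>+\<theta>. emeasure (singular_part Pm (Pt \<theta>)) A \<partial>\<nu>)"
  shows "\<exists>\<theta>\<in>space \<nu>. absolutely_continuous (Pt \<theta>) Pm"
proof (rule exists_dominating_member[OF _ Pt_M1 conv Pm_M1])
  show "space \<nu> \<noteq> {}" using nu by (rule prob_space.not_empty)
  interpret Pm: prob_space Pm using Pm_M1 by (simp add: M1_def)
  fix A assume A: "A \<in> sets M" "A \<notin> null_sets Pm"
  then have "emeasure Pm A \<noteq> 0" using Pm_M1 by (auto simp: M1_def)
  then have "measure Pm A > 0"
    by (simp add: Pm.emeasure_eq_measure less_le)
  then show "\<exists>\<theta>\<in>space \<nu>. emeasure (singular_part Pm (Pt \<theta>)) A < emeasure (Pt \<theta>) A"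
    using A Pt_M1 Pt_meas Pm_mix sing
    by (intro exists_component_not_singular[OF nu _ Pm.finite_measure_axioms]) (auto simp: M1_def)
qed

section \<open>Comparing the risk functionals\<close>

lemma integral_cong_AE_absolutely_continuous:
  assumes "sets Q = sets P" "absolutely_continuous P Q"
    and "f \<in> borel_measurable P" "g \<in> borel_measurable P" "AE x in P. f x = g x"
  shows "(\<integral>x. f x \<partial>Q) = (\<integral>x. g x \<partial>Q)"
proof -
  have "AE x in Q. f x = g x" using assms(1,2,5) by (rule absolutely_continuous_AE)
  with assms(1,3,4) show ?thesis
    by (intro integral_cong_AE) (auto simp: measurable_cong_sets[OF assms(1) refl])
qed

lemma rho_hat_cong_AE:
  assumes "sets P = sets M" "X \<in> borel_measurable M" "Y \<in> borel_measurable M"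
    and "AE \<omega> in P. X \<omega> = Y \<omega>"
  shows "rho_hat M \<alpha> P X = rho_hat M \<alpha> P Y"
  unfolding rho_hat_def
proof (intro SUP_cong refl)
  fix Q assume "Q \<in> {Q \<in> M1 M. absolutely_continuous P Q}"
  then have "(\<integral>\<omega>. - X \<omega> \<partial>Q) = (\<integral>\<omega>. - Y \<omega> \<partial>Q)"
    using assms by (intro integral_cong_AE_absolutely_continuous[of _ P])
      (auto simp: M1_def measurable_cong_sets[OF assms(1) refl])
  then show "ereal (\<integral>\<omega>. - X \<omega> \<partial>Q) - \<alpha> Q = ereal (\<integral>\<omega>. - Y \<omega> \<partial>Q) - \<alpha> Q" by simp
qed

lemma rho_hat_le_rho: "rho_hat M \<alpha> P X \<le> rho M \<alpha> X"
  unfolding rho_hat_def rho_def by (rule SUP_subset_mono) auto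

lemma rho_eq_rho_hat:
  assumes "\<And>Q. Q \<in> M1 M \<Longrightarrow> \<not> absolutely_continuous P Q \<Longrightarrow> \<alpha> Q = \<infinity>"
  shows "rho M \<alpha> X = rho_hat M \<alpha> P X"
proof (rule antisym[OF _ rho_hat_le_rho])
  show "rho M \<alpha> X \<le> rho_hat M \<alpha> P X"
    unfolding rho_def
  proof (rule SUP_least)
    fix Q assume Q: "Q \<in> M1 M"
    show "ereal (\<integral>\<omega>. - X \<omega> \<partial>Q) - \<alpha> Q \<le> rho_hat M \<alpha> P X"
    proof (cases "absolutely_continuous P Q")
      case True
      then show ?thesis using Q unfolding rho_hat_def by (intro SUP_upper) auto
    qed (use assms Q in simp)
  qed
qed

lemma rho_hat_le_rhoP:
  assumes "sets P = sets M" "X \<in> borel_measurable M"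
  shows "rho_hat M \<alpha> P X \<le> rhoP M \<alpha> P X"
  unfolding rhoP_def
proof (rule INF_greatest)
  fix Xt assume Xt: "Xt \<in> {Xt \<in> Xb M. AE \<omega> in P. Xt \<omega> = X \<omega>}"
  then have "rho_hat M \<alpha> P X = rho_hat M \<alpha> P Xt"
    using assms by (intro rho_hat_cong_AE) (auto simp: Xb_def eq_commute)
  also have "\<dots> \<le> rho M \<alpha> Xt" by (rule rho_hat_le_rho)
  finally show "rho_hat M \<alpha> P X \<le> rho M \<alpha> Xt" .
qed

lemma exists_Xb_AE_eq_Linf:
  assumes "sets P = sets M" "sets Q = sets M" "X \<in> Linf P" "X \<in> Linf Q"
  obtains Xt where "Xt \<in> Xb M" "AE \<omega> in P. Xt \<omega> = X \<omega>" "AE \<omega> in Q. Xt \<omega> = X \<omega>"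
proof -
  obtain c1 c2 where c: "AE \<omega> in P. \<bar>X \<omega>\<bar> \<le> c1" "AE \<omega> in Q. \<bar>X \<omega>\<bar> \<le> c2"
    using assms(3,4) unfolding Linf_def by auto
  define c where "c = max c1 c2"
  define Xt where "Xt \<omega> = max (- c) (min c (X \<omega>))" for \<omega>
  have "X \<in> borel_measurable M"
    using assms(1,3) unfolding Linf_def by (simp add: measurable_cong_sets[OF assms(1) refl])
  then have "Xt \<in> borel_measurable M" unfolding Xt_def by measurable
  moreover have "bounded (Xt ` space M)"
    unfolding bounded_iff Xt_def by (intro exI[of _ "\<bar>c\<bar>"]) auto
  moreover have "AE \<omega> in P. Xt \<omega> = X \<omega>" "AE \<omega> in Q. Xt \<omega> = X \<omega>"
    using c by (auto elim!: AE_mp simp: Xt_def c_def)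
  ultimately show thesis using that[of Xt] unfolding Xb_def by auto
qed

lemma rhoP_le_rho_hat:
  assumes sets: "sets P = sets M" "sets Pm = sets M"
    and \<alpha>: "\<And>Q. Q \<in> M1 M \<Longrightarrow> \<not> absolutely_continuous Pm Q \<Longrightarrow> \<alpha> Q = \<infinity>"
    and X: "X \<in> Linf P" "X \<in> Linf Pm"
  shows "rhoP M \<alpha> P X \<le> rho_hat M \<alpha> Pm X"
proof -
  obtain Xt where Xt: "Xt \<in> Xb M" "AE \<omega> in P. Xt \<omega> = X \<omega>" "AE \<omega> in Pm. Xt \<omega> = X \<omega>"
    using exists_Xb_AE_eq_Linf[OF sets X] .
  have "rhoP M \<alpha> P X \<le> rho M \<alpha> Xt" unfolding rhoP_def using Xt by (intro INF_lower) auto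
  also have "\<dots> = rho_hat M \<alpha> Pm Xt" using \<alpha> by (rule rho_eq_rho_hat)
  also have "\<dots> = rho_hat M \<alpha> Pm X"
    using Xt X(2) sets(2) unfolding Xb_def Linf_def
    by (intro rho_hat_cong_AE) (auto simp: measurable_cong_sets[OF sets(2) refl])
  finally show ?thesis .
qed

lemma rho_hat_mono_absolutely_continuous:
  assumes "absolutely_continuous P Pm"
  shows "rho_hat M \<alpha> Pm X \<le> rho_hat M \<alpha> P X"
  unfolding rho_hat_def using assms
  by (intro SUP_subset_mono) (auto simp: absolutely_continuous_def)

theorem corollary6p14:
  fixes M :: "'a measure" and \<nu> :: "'b measure" and Pt :: "'b \<Rightarrow> 'a measure"
    and Pm :: "'a measure"
    and Qset :: "'a measure set" and alpha_t :: "'a measure \<Rightarrow> real"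
    and \<alpha> :: "'a measure \<Rightarrow> ereal"
  assumes nu: "prob_space \<nu>"
    and Pt_M1: "\<forall>\<theta>\<in>space \<nu>. Pt \<theta> \<in> M1 M"
    and Pt_meas: "\<forall>A\<in>sets M. (\<lambda>\<theta>. measure (Pt \<theta>) A) \<in> borel_measurable \<nu>"
    and conv: "\<forall>P lam. (\<forall>i. P i \<in> Pt ` space \<nu>) \<longrightarrow> (\<forall>i. lam i \<ge> 0) \<longrightarrow> lam sums 1 \<longrightarrow>
        (\<exists>\<theta>\<in>space \<nu>. \<forall>A\<in>sets M. measure (Pt \<theta>) A = (\<Sum>i. lam i * measure (P i) A))"
    and Pm_M1: "Pm \<in> M1 M"
    and Pm_mix: "\<forall>A\<in>sets M. measure Pm A = (\<integral>\<theta>. measure (Pt \<theta>) A \<partial>\<nu>)"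
    and alpha_def: "\<forall>Q. \<alpha> Q = (if Q \<in> Qset then ereal (alpha_t Q) else \<infinity>)"
    and Qset_sub: "Qset \<subseteq> {Q \<in> M1 M. absolutely_continuous Pm Q}"
    and Qset_closed: "weak_closed M Qset"
    and at_bdd: "bdd_below (alpha_t ` Qset)"
    and rho_real: "\<forall>X\<in>Xb M. \<bar>rho M \<alpha> X\<bar> \<noteq> \<infinity>"
    and sing: "\<forall>A\<in>sets M. measure Pm A > 0 \<longrightarrow>
        emeasure Pm A > (\<integral>\<^sup>+\<theta>. emeasure (singular_part Pm (Pt \<theta>)) A \<partial>\<nu>)"
    and X: "X \<in> XM (Pt ` space \<nu>) \<inter> Linf Pm"
  shows "rho_hatM M \<alpha> (Pt ` space \<nu>) X = rho_hat M \<alpha> Pm X \<and>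
         rho_hat M \<alpha> Pm X = rhoP M \<alpha> Pm X \<and>
         rhoP M \<alpha> Pm X = rhoM M \<alpha> (Pt ` space \<nu>) X"
proof -
  let ?Ms = "Pt ` space \<nu>"
  have sets_Pm: "sets Pm = sets M" using Pm_M1 by (simp add: M1_def)
  have sets_Pt: "sets (Pt \<theta>) = sets M" if "\<theta> \<in> space \<nu>" for \<theta>
    using Pt_M1 that by (simp add: M1_def)
  have X_Pm: "X \<in> Linf Pm" and X_Pt: "\<And>\<theta>. \<theta> \<in> space \<nu> \<Longrightarrow> X \<in> Linf (Pt \<theta>)"
    using X unfolding XM_def by auto
  have X_meas: "X \<in> borel_measurable M"
    using X_Pm unfolding Linf_def by (simp add: measurable_cong_sets[OF sets_Pm refl])
  have \<alpha>_inf: "\<And>Q. Q \<in> M1 M \<Longrightarrow> \<not> absolutely_continuous Pm Q \<Longrightarrow> \<alpha> Q = \<infinity>"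
    using alpha_def Qset_sub by auto
  have upper: "rho_hat M \<alpha> (Pt \<theta>) X \<le> rhoP M \<alpha> (Pt \<theta>) X"
    "rhoP M \<alpha> (Pt \<theta>) X \<le> rho_hat M \<alpha> Pm X" if "\<theta> \<in> space \<nu>" for \<theta>
    using rho_hat_le_rhoP[OF sets_Pt X_meas] rhoP_le_rho_hat[OF sets_Pt sets_Pm \<alpha>_inf X_Pt X_Pm] that
    by auto
  obtain \<theta> where \<theta>: "\<theta> \<in> space \<nu>" "absolutely_continuous (Pt \<theta>) Pm"
    using mixture_has_dominating_member[OF nu Pt_M1 Pt_meas conv Pm_M1 Pm_mix sing] by blast
  have lower: "rho_hat M \<alpha> Pm X \<le> rho_hat M \<alpha> (Pt \<theta>) X"
    using \<theta>(2) by (rule rho_hat_mono_absolutely_continuous)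
  have "rho_hatM M \<alpha> ?Ms X = rho_hat M \<alpha> Pm X"
    unfolding rho_hatM_def using upper lower \<theta>(1)
    by (intro antisym SUP_least SUP_upper2) (auto intro: order_trans)
  moreover have "rhoM M \<alpha> ?Ms X = rho_hat M \<alpha> Pm X"
    unfolding rhoM_def using upper lower \<theta>(1)
    by (intro antisym SUP_least SUP_upper2) (auto intro: order_trans)
  moreover have "rhoP M \<alpha> Pm X = rho_hat M \<alpha> Pm X"
    using rhoP_le_rho_hat[OF sets_Pm sets_Pm \<alpha>_inf X_Pm X_Pm] rho_hat_le_rhoP[OF sets_Pm X_meas]
    by (rule antisym)
  ultimately show ?thesis by simp
qed

end
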